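(* Let $\Psi$ be a well-formed declarative context and suppose $\Psi\vdash e\Leftarrow A$. Then: (i) if $\Psi\vdash[(e:A)/x]e'\Leftarrow C$ then $\Psi,x:A\vdash e'\Leftarrow C$; (ii) if $\Psi\vdash[(e:A)/x]e'\Rightarrow C$ then $\Psi,x:A\vdash e'\Rightarrow C$; (iii) if $\Psi\vdash[(e:A)/x]e'\bullet B\Rightarrow\!\!\Rightarrow C$ then $\Psi,x:A\vdash e'\bullet B\Rightarrow\!\!\Rightarrow C$.
   Context: Types $A,B,C ::= 1\mid\alpha\mid\forall\alpha.A\mid A\to B$; monotypes $\sigma,\tau ::= 1\mid\alpha\mid\sigma\to\tau$; declarative contexts $\Psi ::= \cdot\mid\Psi,\alpha\mid\Psi,x:A$ (variables distinct; $x$ is not declared in $\Psi$). Well-formedness $\Psi\vdash A$: all free type variables of $A$ are declared in $\Psi$. Declarative subtyping $\Psi\vdash A\le B$: least relation with $\alpha\in\Psi\Rightarrow\Psi\vdash\alpha\le\alpha$; $\Psi\vdash1\le1$; ($\Psi\vdash B_1\le A_1$, $\Psi\vdash A_2\le B_2$) $\Rightarrow\Psi\vdash A_1\to A_2\le B_1\to B_2$; ($\Psi\vdash\tau$ monotype, $\Psi\vdash[\tau/\alpha]A\le B$) $\Rightarrow\Psi\vdash\forall\alpha.A\le B$; $\Psi,\beta\vdash A\le B\Rightarrow\Psi\vdash A\le\forall\beta.B$. Terms $e ::= x\mid()\mid\lambda x.e\mid e_1\,e_2\mid(e:A)$; $[e_0/x]e'$ is capture-avoiding term substitution. Declarative bidirectional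 judgments are defined mutually by: $(x:A)\in\Psi\Rightarrow\Psi\vdash x\Rightarrow A$; ($\Psi\vdash e\Rightarrow A$, $\Psi\vdash A\le B$) $\Rightarrow\Psi\vdash e\Leftarrow B$; ($\Psi\vdash A$, $\Psi\vdash e\Leftarrow A$) $\Rightarrow\Psi\vdash(e:A)\Rightarrow A$; $\Psi\vdash()\Leftarrow1$; $\Psi\vdash()\Rightarrow1$; $\Psi,\alpha\vdash e\Leftarrow A\Rightarrow\Psi\vdash e\Leftarrow\forall\alpha.A$; ($\Psi\vdash\tau$ monotype, $\Psi\vdash e\bullet[\tau/\alpha]A\Rightarrow\!\!\Rightarrow C$) $\Rightarrow\Psi\vdash e\bullet\forall\alpha.A\Rightarrow\!\!\Rightarrow C$; $\Psi,x:A\vdash e\Leftarrow B\Rightarrow\Psi\vdash\lambda x.e\Leftarrow A\to B$; ($\Psi\vdash\sigma\to\tau$ monotypes, $\Psi,x:\sigma\vdash e\Leftarrow\tau$) $\Rightarrow\Psi\vdash\lambda x.e\Rightarrow\sigma\to\tau$; ($\Psi\vdash e_1\Rightarrow A$, $\Psi\vdash e_2\bullet A\Rightarrow\!\!\Rightarrow C$) $\Rightarrow\Psi\vdash e_1\,e_2\Rightarrow C$; $\Psi\vdash e\Leftarrow A\Rightarrow\Psi\vdash e\bullet A\to C\Rightarrow\!\!\Rightarrow C$. *)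

theory Defs
  imports Main
begin

text \<open>Locally nameless representation: bound (type/term) variables are de Bruijn
  indices, free variables are names. Binders: TAll binds type index 0, Lam binds
  term index 0. Capture-avoiding substitution of a free variable is then plain
  replacement.\<close>

type_synonym name = string

datatype ty = TUnit | TBVar nat | TFVar name | TAll ty | TArr ty ty

datatype tm = BVar nat | FVar name | Unit | Lam tm | App tm tm | Anno tm ty

fun open_ty_rec :: "nat \<Rightarrow> ty \<Rightarrow> ty \<Rightarrow> ty" where
  "open_ty_rec k t TUnit = TUnit"
| "open_ty_rec k t (TBVar i) = (if i = k then t else TBVar i)"
| "open_ty_rec k t (TFVar a) = TFVar a"
| "open_ty_rec k t (TAll A) = TAll (open_ty_rec (Suc k) t A)"
| "open_ty_rec k t (TArr A B) = TArr (open_ty_rec k t A) (open_ty_rec k t B)"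

definition open_ty :: "ty \<Rightarrow> ty \<Rightarrow> ty" where
  "open_ty t A = open_ty_rec 0 t A"

fun open_tm_rec :: "nat \<Rightarrow> tm \<Rightarrow> tm \<Rightarrow> tm" where
  "open_tm_rec k u (BVar i) = (if i = k then u else BVar i)"
| "open_tm_rec k u (FVar y) = FVar y"
| "open_tm_rec k u Unit = Unit"
| "open_tm_rec k u (Lam e) = Lam (open_tm_rec (Suc k) u e)"
| "open_tm_rec k u (App e1 e2) = App (open_tm_rec k u e1) (open_tm_rec k u e2)"
| "open_tm_rec k u (Anno e A) = Anno (open_tm_rec k u e) A"

definition open_tm :: "tm \<Rightarrow> tm \<Rightarrow> tm" where
  "open_tm u e = open_tm_rec 0 u e"

fun subst :: "name \<Rightarrow> tm \<Rightarrow> tm \<Rightarrow> tm" where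
  "subst x u (BVar i) = BVar i"
| "subst x u (FVar y) = (if y = x then u else FVar y)"
| "subst x u Unit = Unit"
| "subst x u (Lam e) = Lam (subst x u e)"
| "subst x u (App e1 e2) = App (subst x u e1) (subst x u e2)"
| "subst x u (Anno e A) = Anno (subst x u e) A"

fun ftv :: "ty \<Rightarrow> name set" where
  "ftv TUnit = {}"
| "ftv (TBVar i) = {}"
| "ftv (TFVar a) = {a}"
| "ftv (TAll A) = ftv A"
| "ftv (TArr A B) = ftv A \<union> ftv B"

fun lc_ty_at :: "nat \<Rightarrow> ty \<Rightarrow> bool" where
  "lc_ty_at k TUnit = True"
| "lc_ty_at k (TBVar i) = (i < k)"
| "lc_ty_at k (TFVar a) = True"
| "lc_ty_at k (TAll A) = lc_ty_at (Suc k) A"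
| "lc_ty_at k (TArr A B) = (lc_ty_at k A \<and> lc_ty_at k B)"

fun mono :: "ty \<Rightarrow> bool" where
  "mono TUnit = True"
| "mono (TBVar i) = True"
| "mono (TFVar a) = True"
| "mono (TAll A) = False"
| "mono (TArr A B) = (mono A \<and> mono B)"

text \<open>Declarative contexts; the head of the list is the most recent entry,
  so \<Psi>,\<alpha> is CTV \<alpha> # \<Psi> and \<Psi>,x:A is CV x A # \<Psi>.\<close>
datatype entry = CTV name | CV name ty
type_synonym ctx = "entry list"

definition tvars :: "ctx \<Rightarrow> name set" where
  "tvars \<Psi> = {a. CTV a \<in> set \<Psi>}"

definition vars :: "ctx \<Rightarrow> name set" where
  "vars \<Psi> = {x. \<exists>A. CV x A \<in> set \<Psi>}"

definition wf_ty :: "ctx \<Rightarrow> ty \<Rightarrow> bool" where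
  "wf_ty \<Psi> A \<longleftrightarrow> lc_ty_at 0 A \<and> ftv A \<subseteq> tvars \<Psi>"

fun wf_ctx :: "ctx \<Rightarrow> bool" where
  "wf_ctx [] = True"
| "wf_ctx (CTV a # \<Psi>) = (wf_ctx \<Psi> \<and> a \<notin> tvars \<Psi>)"
| "wf_ctx (CV x A # \<Psi>) = (wf_ctx \<Psi> \<and> x \<notin> vars \<Psi> \<and> wf_ty \<Psi> A)"

inductive sub :: "ctx \<Rightarrow> ty \<Rightarrow> ty \<Rightarrow> bool" where
  sub_var: "CTV a \<in> set \<Psi> \<Longrightarrow> sub \<Psi> (TFVar a) (TFVar a)"
| sub_unit: "sub \<Psi> TUnit TUnit"
| sub_arr: "sub \<Psi> B1 A1 \<Longrightarrow> sub \<Psi> A2 B2 \<Longrightarrow> sub \<Psi> (TArr A1 A2) (TArr B1 B2)"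
| sub_allL: "wf_ty \<Psi> t \<Longrightarrow> mono t \<Longrightarrow> sub \<Psi> (open_ty t A) B \<Longrightarrow> sub \<Psi> (TAll A) B"
| sub_allR: "finite L \<Longrightarrow> (\<forall>b. b \<notin> L \<longrightarrow> sub (CTV b # \<Psi>) A (open_ty (TFVar b) B))
              \<Longrightarrow> sub \<Psi> A (TAll B)"

text \<open>Declarative bidirectional typing: infer (\<Rightarrow>), check (\<Leftarrow>),
  application judgment app \<Psi> e A C  for  e \<bullet> A \<Rightarrow>\<Rightarrow> C.\<close>
inductive infer :: "ctx \<Rightarrow> tm \<Rightarrow> ty \<Rightarrow> bool"
  and check :: "ctx \<Rightarrow> tm \<Rightarrow> ty \<Rightarrow> bool"
  and app :: "ctx \<Rightarrow> tm \<Rightarrow> ty \<Rightarrow> ty \<Rightarrow> bool" where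
  i_var: "CV x A \<in> set \<Psi> \<Longrightarrow> infer \<Psi> (FVar x) A"
| c_sub: "infer \<Psi> e A \<Longrightarrow> sub \<Psi> A B \<Longrightarrow> check \<Psi> e B"
| i_anno: "wf_ty \<Psi> A \<Longrightarrow> check \<Psi> e A \<Longrightarrow> infer \<Psi> (Anno e A) A"
| c_unit: "check \<Psi> Unit TUnit"
| i_unit: "infer \<Psi> Unit TUnit"
| c_all: "finite L \<Longrightarrow> (\<forall>a. a \<notin> L \<longrightarrow> check (CTV a # \<Psi>) e (open_ty (TFVar a) A))
          \<Longrightarrow> check \<Psi> e (TAll A)"
| a_all: "wf_ty \<Psi> t \<Longrightarrow> mono t \<Longrightarrow> app \<Psi> e (open_ty t A) C \<Longrightarrow> app \<Psi> e (TAll A) C"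
| c_lam: "finite L \<Longrightarrow> (\<forall>x. x \<notin> L \<longrightarrow> check (CV x A # \<Psi>) (open_tm (FVar x) e) B)
          \<Longrightarrow> check \<Psi> (Lam e) (TArr A B)"
| i_lam: "wf_ty \<Psi> (TArr s t) \<Longrightarrow> mono s \<Longrightarrow> mono t \<Longrightarrow> finite L \<Longrightarrow>
          (\<forall>x. x \<notin> L \<longrightarrow> check (CV x s # \<Psi>) (open_tm (FVar x) e) t)
          \<Longrightarrow> infer \<Psi> (Lam e) (TArr s t)"
| i_app: "infer \<Psi> e1 A \<Longrightarrow> app \<Psi> e2 A C \<Longrightarrow> infer \<Psi> (App e1 e2) C"
| a_arr: "check \<Psi> e A \<Longrightarrow> app \<Psi> e (TArr A C) C"

end

theory Submission
  imports Defs
begin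

text \<open>The annotation (e : A) infers exactly A, and so does the new variable x : A.
  So in a derivation for [(e:A)/x]e', every use of an occurrence of (e : A) coming from x
  can be replaced by a use of x, and all other rules are re-applied in the context extended
  by x : A, which is harmless because typing is monotone in the set of context entries.
  Under binders, opening commutes with the substitution since e, being typable, is locally
  closed; this is the only use of the typing hypothesis on e.\<close>

lemma wf_ty_weaken: "wf_ty \<Psi> A \<Longrightarrow> set \<Psi> \<subseteq> set \<Psi>' \<Longrightarrow> wf_ty \<Psi>' A"
  unfolding wf_ty_def tvars_def by auto

lemma sub_weaken: "sub \<Psi> A B \<Longrightarrow> set \<Psi> \<subseteq> set \<Psi>' \<Longrightarrow> sub \<Psi>' A B"
proof (induction arbitrary: \<Psi>' rule: sub.induct)
  case (sub_allR L \<Psi> A B)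
  have "set (CTV b # \<Psi>) \<subseteq> set (CTV b # \<Psi>')" for b using sub_allR.prems by auto
  with sub_allR show ?case by (intro sub.sub_allR[of L]) blast+
qed (auto intro: sub.intros wf_ty_weaken)

lemma
  shows infer_weaken: "infer \<Psi> t C \<Longrightarrow> set \<Psi> \<subseteq> set \<Psi>' \<Longrightarrow> infer \<Psi>' t C"
    and check_weaken: "check \<Psi> t C \<Longrightarrow> set \<Psi> \<subseteq> set \<Psi>' \<Longrightarrow> check \<Psi>' t C"
    and app_weaken: "app \<Psi> t B C \<Longrightarrow> set \<Psi> \<subseteq> set \<Psi>' \<Longrightarrow> app \<Psi>' t B C"
proof (induction arbitrary: \<Psi>' and \<Psi>' and \<Psi>' rule: infer_check_app.inducts)
  case (c_all L \<Psi> e A)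
  have "set (CTV a # \<Psi>) \<subseteq> set (CTV a # \<Psi>')" for a using c_all.prems by auto
  with c_all show ?case by (intro infer_check_app.c_all[of L]) blast+
next
  case (c_lam L A \<Psi> e B)
  have "set (CV y A # \<Psi>) \<subseteq> set (CV y A # \<Psi>')" for y using c_lam.prems by auto
  with c_lam show ?case by (intro infer_check_app.c_lam[of L]) blast+
next
  case (i_lam \<Psi> s t L e)
  have "set (CV y s # \<Psi>) \<subseteq> set (CV y s # \<Psi>')" for y using i_lam.prems by auto
  with i_lam show ?case by (intro infer_check_app.i_lam[of _ _ _ L]) (blast intro: wf_ty_weaken)+
qed (auto intro: infer_check_app.intros wf_ty_weaken sub_weaken)

fun lc_tm_at :: "nat \<Rightarrow> tm \<Rightarrow> bool" where
  "lc_tm_at k (BVar i) = (i < k)"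
| "lc_tm_at k (FVar y) = True"
| "lc_tm_at k Unit = True"
| "lc_tm_at k (Lam e) = lc_tm_at (Suc k) e"
| "lc_tm_at k (App e1 e2) = (lc_tm_at k e1 \<and> lc_tm_at k e2)"
| "lc_tm_at k (Anno e A) = lc_tm_at k e"

lemma lc_tm_at_open_FVar: "lc_tm_at k (open_tm_rec k (FVar y) e) \<Longrightarrow> lc_tm_at (Suc k) e"
  by (induction e arbitrary: k) (auto split: if_splits)

lemma open_tm_rec_lc_tm_at: "lc_tm_at j u \<Longrightarrow> j \<le> k \<Longrightarrow> open_tm_rec k v u = u"
  by (induction u arbitrary: j k) auto

lemma ex_fresh_name: "finite (L :: name set) \<Longrightarrow> \<exists>y. y \<notin> L"
  using ex_new_if_finite infinite_UNIV_listI by blast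

lemma
  shows infer_lc_tm: "infer \<Psi> t C \<Longrightarrow> lc_tm_at 0 t"
    and check_lc_tm: "check \<Psi> t C \<Longrightarrow> lc_tm_at 0 t"
    and app_lc_tm: "app \<Psi> t B C \<Longrightarrow> lc_tm_at 0 t"
proof (induction rule: infer_check_app.inducts)
  case (c_all L \<Psi> e A)
  then obtain a where "a \<notin> L" using ex_fresh_name by blast
  with c_all show ?case by blast
next
  case (c_lam L A \<Psi> e B)
  then obtain y where "y \<notin> L" using ex_fresh_name by blast
  with c_lam show ?case by (auto simp: open_tm_def intro: lc_tm_at_open_FVar)
next
  case (i_lam \<Psi> s t L e)
  then obtain y where "y \<notin> L" using ex_fresh_name by blast
  with i_lam show ?case by (auto simp: open_tm_def intro: lc_tm_at_open_FVar)
qed auto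

lemma open_tm_rec_subst:
  "y \<noteq> x \<Longrightarrow> lc_tm_at 0 u \<Longrightarrow>
   open_tm_rec k (FVar y) (subst x u t) = subst x u (open_tm_rec k (FVar y) t)"
  by (induction t arbitrary: k) (auto simp: open_tm_rec_lc_tm_at)

lemma FVar_eq_subst_Anno: "FVar y = subst x (Anno e A) t \<longleftrightarrow> t = FVar y \<and> y \<noteq> x"
  by (cases t) auto

lemma Unit_eq_subst_Anno: "Unit = subst x (Anno e A) t \<longleftrightarrow> t = Unit"
  by (cases t) auto

lemma Lam_eq_subst_Anno:
  "Lam b = subst x (Anno e A) t \<longleftrightarrow> (\<exists>t'. t = Lam t' \<and> b = subst x (Anno e A) t')"
  by (cases t) auto

lemma App_eq_subst_Anno:
  "App b1 b2 = subst x (Anno e A) t \<longleftrightarrow>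
   (\<exists>t1 t2. t = App t1 t2 \<and> b1 = subst x (Anno e A) t1 \<and> b2 = subst x (Anno e A) t2)"
  by (cases t) auto

lemma Anno_eq_subst_Anno:
  "Anno b B = subst x (Anno e A) t \<longleftrightarrow>
   t = FVar x \<and> b = e \<and> B = A \<or> (\<exists>t'. t = Anno t' B \<and> b = subst x (Anno e A) t')"
  by (cases t) auto

lemma
  assumes e_lc: "lc_tm_at 0 e"
  shows infer_unsubst_Anno:
      "infer \<Psi> s C \<Longrightarrow> s = subst x (Anno e A) t \<Longrightarrow> infer (CV x A # \<Psi>) t C"
    and check_unsubst_Anno:
      "check \<Psi> s C \<Longrightarrow> s = subst x (Anno e A) t \<Longrightarrow> check (CV x A # \<Psi>) t C"
    and app_unsubst_Anno:
      "app \<Psi> s B C \<Longrightarrow> s = subst x (Anno e A) t \<Longrightarrow> app (CV x A # \<Psi>) t B C"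
proof (induction arbitrary: t and t and t rule: infer_check_app.inducts)
  case (i_var y B \<Psi>)
  then show ?case by (auto simp: FVar_eq_subst_Anno intro: infer_check_app.i_var)
next
  case (c_sub \<Psi> s A' B)
  have "sub (CV x A # \<Psi>) A' B" using c_sub.hyps(2) by (rule sub_weaken) auto
  with c_sub show ?case by (blast intro: infer_check_app.c_sub)
next
  case (i_anno \<Psi> A' s)
  then consider "t = FVar x" "A' = A" | t' where "t = Anno t' A'" "s = subst x (Anno e A) t'"
    by (auto simp: Anno_eq_subst_Anno)
  then show ?case
  proof cases
    case 1
    then show ?thesis by (auto intro: infer_check_app.i_var)
  next
    case 2
    have "wf_ty (CV x A # \<Psi>) A'" using i_anno.hyps(1) by (rule wf_ty_weaken) auto
    with 2 i_anno show ?thesis by (auto intro: infer_check_app.i_anno)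
  qed
next
  case (c_unit \<Psi>)
  then show ?case by (simp add: Unit_eq_subst_Anno infer_check_app.c_unit)
next
  case (i_unit \<Psi>)
  then show ?case by (simp add: Unit_eq_subst_Anno infer_check_app.i_unit)
next
  case (c_all L \<Psi> s A')
  show ?case
  proof (rule infer_check_app.c_all[OF c_all.hyps(1)], intro allI impI)
    fix a assume "a \<notin> L"
    with c_all have "check (CV x A # CTV a # \<Psi>) t (open_ty (TFVar a) A')" by blast
    then show "check (CTV a # CV x A # \<Psi>) t (open_ty (TFVar a) A')"
      by (rule check_weaken) auto
  qed
next
  case (a_all \<Psi> \<tau> s A' C)
  have "wf_ty (CV x A # \<Psi>) \<tau>" using a_all.hyps(1) by (rule wf_ty_weaken) auto
  with a_all show ?case by (auto intro: infer_check_app.a_all)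
next
  case (c_lam L A' \<Psi> b B)
  then obtain t' where t: "t = Lam t'" and b: "b = subst x (Anno e A) t'"
    by (auto simp: Lam_eq_subst_Anno)
  have "check (CV x A # \<Psi>) (Lam t') (TArr A' B)"
  proof (rule infer_check_app.c_lam[OF finite.insertI[OF c_lam.hyps(1)]], intro allI impI)
    fix y assume y: "y \<notin> insert x L"
    then have "open_tm (FVar y) b = subst x (Anno e A) (open_tm (FVar y) t')"
      using e_lc by (simp add: b open_tm_def open_tm_rec_subst)
    with c_lam y have "check (CV x A # CV y A' # \<Psi>) (open_tm (FVar y) t') B" by blast
    then show "check (CV y A' # CV x A # \<Psi>) (open_tm (FVar y) t') B"
      by (rule check_weaken) auto
  qed
  with t show ?case by simp
next
  case (i_lam \<Psi> \<sigma> \<tau> L b)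
  then obtain t' where t: "t = Lam t'" and b: "b = subst x (Anno e A) t'"
    by (auto simp: Lam_eq_subst_Anno)
  have wf: "wf_ty (CV x A # \<Psi>) (TArr \<sigma> \<tau>)" using i_lam.hyps(1) by (rule wf_ty_weaken) auto
  have "infer (CV x A # \<Psi>) (Lam t') (TArr \<sigma> \<tau>)"
  proof (rule infer_check_app.i_lam[OF wf i_lam.hyps(2,3) finite.insertI[OF i_lam.hyps(4)]],
      intro allI impI)
    fix y assume y: "y \<notin> insert x L"
    then have "open_tm (FVar y) b = subst x (Anno e A) (open_tm (FVar y) t')"
      using e_lc by (simp add: b open_tm_def open_tm_rec_subst)
    with i_lam y have "check (CV x A # CV y \<sigma> # \<Psi>) (open_tm (FVar y) t') \<tau>" by blast
    then show "check (CV y \<sigma> # CV x A # \<Psi>) (open_tm (FVar y) t') \<tau>"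
      by (rule check_weaken) auto
  qed
  with t show ?case by simp
next
  case (i_app \<Psi> s1 A' s2 C)
  then show ?case by (auto simp: App_eq_subst_Anno intro: infer_check_app.i_app)
next
  case (a_arr \<Psi> s A' C)
  then show ?case by (auto intro: infer_check_app.a_arr)
qed

theorem mainTheorem4:
  assumes "wf_ctx \<Psi>"
    and "x \<notin> vars \<Psi>"
    and "check \<Psi> e A"
  shows "(check \<Psi> (subst x (Anno e A) e') C \<longrightarrow> check (CV x A # \<Psi>) e' C)
       \<and> (infer \<Psi> (subst x (Anno e A) e') C \<longrightarrow> infer (CV x A # \<Psi>) e' C)
       \<and> (\<forall>B. app \<Psi> (subst x (Anno e A) e') B C \<longrightarrow> app (CV x A # \<Psi>) e' B C)"
proof -
  \<comment> \<open>Membership-based lookup makes the freshness and well-formedness hypotheses unnecessary.\<close>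
  have e_lc: "lc_tm_at 0 e" using assms(3) by (rule check_lc_tm)
  show ?thesis
    using check_unsubst_Anno[OF e_lc _ refl] infer_unsubst_Anno[OF e_lc _ refl]
      app_unsubst_Anno[OF e_lc _ refl]
    by blast
qed

end
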